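(* Let $m$ be a positive integer and $u,v\in[m]^*$. Then $u\backsim_{[m]}v$ if and only if there exists a rearrangement map $f:\mathbb{P}^*\to\mathbb{P}^*$ that witnesses the Wilf equivalence $u\backsim v$.
   Context: $\mathbb{P}^*$ is the set of finite words over the positive integers (usual order), and $[m]^*\subseteq\mathbb{P}^*$ the words over $[m]=\{1,\ldots,m\}$. For words $u,w$, $u\le w$ (generalized factor order) if there are $|u|$ consecutive letters of $w$ whose $i$-th letter is $\ge$ the $i$-th letter of $u$ for each $i$; $\mathcal{F}(u)=\{w\in\mathbb{P}^*:u\le w\}$. With $\mathrm{wt}(w)=t^{n}x^{\sum_i w_i}$ for $w=w_1\ldots w_n$ and $F(u;t,x)=\sum_{w\in\mathcal{F}(u)}\mathrm{wt}(w)$, $u\backsim v$ iff $F(u;t,x)=F(v;t,x)$. For $w\in[m]^*$ let $c_i(w)$ be the number of occurrences of $i$ in $w$ and $W_{[m]}(w)=\prod_{i=1}^m x_i^{c_i(w)}$; $F(u;x_1,\ldots,x_m)=\sum_{w\in\mathcal{F}(u)\cap[m]^*}W_{[m]}(w)$, and $u\backsim_{[m]}v$ iff $F(u;x_1,\ldots,x_m)=F(v;x_1,\ldots,x_m)$. A rearrangement map witnessing $u\backsim v$ is a weight-preserving bijection $f:\mathbb{P}^*\to\mathbb{P}^*$ such that $f(w)$ is a rearrangement (permutation of the letters) of $w$ for every $w$, and $w\in\mathcal{F}(u)\iff f(w)\in\mathcal{F}(v)$. *)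

theory Defs
  imports "HOL-Library.Multiset"
begin

definition Pstar :: "nat list set" where
  "Pstar = {w. \<forall>a\<in>set w. 1 \<le> a}"

definition words_on :: "nat \<Rightarrow> nat list set" where
  "words_on m = {w. \<forall>a\<in>set w. 1 \<le> a \<and> a \<le> m}"

definition gfo_le :: "nat list \<Rightarrow> nat list \<Rightarrow> bool" where
  "gfo_le u w \<longleftrightarrow> (\<exists>i. i + length u \<le> length w \<and> (\<forall>j<length u. u ! j \<le> w ! (i + j)))"

definition Fset :: "nat list \<Rightarrow> nat list set" where
  "Fset u = {w \<in> Pstar. gfo_le u w}"

text \<open>u \<backsim>_[m] v: the generating functions F(u;x_1..x_m) and F(v;x_1..x_m) coincide,
  i.e. for each monomial (determined by the multiset of letters, i.e. the counts c_i)
  the coefficients agree.\<close>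
definition wilf_m :: "nat \<Rightarrow> nat list \<Rightarrow> nat list \<Rightarrow> bool" where
  "wilf_m m u v \<longleftrightarrow>
     (\<forall>M :: nat multiset.
        card {w \<in> Fset u \<inter> words_on m. mset w = M} =
        card {w \<in> Fset v \<inter> words_on m. mset w = M})"

definition rearrangement_map :: "(nat list \<Rightarrow> nat list) \<Rightarrow> nat list \<Rightarrow> nat list \<Rightarrow> bool" where
  "rearrangement_map f u v \<longleftrightarrow>
     bij_betw f Pstar Pstar \<and>
     (\<forall>w\<in>Pstar. mset (f w) = mset w) \<and>
     (\<forall>w\<in>Pstar. w \<in> Fset u \<longleftrightarrow> f w \<in> Fset v)"

end

theory Submission
  imports Defs
begin

text \<open>
  Whether a word w lies in Fset u, for u over [m], only depends on its
  truncation  trunc m w = map (min m) w  (letters above m can be lowered to m without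
  affecting domination of u).  A word w over the positive integers is recovered from
  trunc m w and the subsequence  high m w  of its letters that are \<ge> m, and this
  decomposition is a bijection between Pstar and the pairs (t, r) with t over [m],
  r over {m..} and #(occurrences of m in t) = length r.

  (\<Rightarrow>) If u and v are Wilf-equivalent over [m], every rearrangement class
  {w over [m]. mset w = M} is finite and meets Fset u and Fset v in equally many words,
  so it has a self-bijection carrying one intersection onto the other; gluing these
  class by class gives a rearrangement bijection g of [m]^*.  Conjugating  g \<times> id  by
  the decomposition lifts g to the required rearrangement map on Pstar.
  (\<Leftarrow>) A rearrangement bijection of Pstar restricts to a bijection of each (finite)
  class {w. mset w = M}, and maps the words of Fset u over [m] onto those of Fset v.
\<close>

lemma bij_betw_fibrewise:
  assumes H: "\<And>k. bij_betw (H k) {x \<in> X. \<kappa> x = k} {x \<in> X. \<kappa> x = k}"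
  shows "bij_betw (\<lambda>x. H (\<kappa> x) x) X X"
proof -
  have fibre: "H (\<kappa> x) x \<in> X \<and> \<kappa> (H (\<kappa> x) x) = \<kappa> x" if "x \<in> X" for x
    using bij_betwE[OF H[of "\<kappa> x"]] that by blast
  have "inj_on (\<lambda>x. H (\<kappa> x) x) X"
  proof (rule inj_onI)
    fix x y assume x: "x \<in> X" and y: "y \<in> X" and eq: "H (\<kappa> x) x = H (\<kappa> y) y"
    then have "\<kappa> x = \<kappa> y" using fibre by metis
    then show "x = y"
      using inj_onD[OF bij_betw_imp_inj_on[OF H[of "\<kappa> x"]]] x y eq by auto
  qed
  moreover have "(\<lambda>x. H (\<kappa> x) x) ` X = X"
  proof
    show "(\<lambda>x. H (\<kappa> x) x) ` X \<subseteq> X" using fibre by auto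
  next
    show "X \<subseteq> (\<lambda>x. H (\<kappa> x) x) ` X"
    proof
      fix y assume y: "y \<in> X"
      then have "y \<in> H (\<kappa> y) ` {x \<in> X. \<kappa> x = \<kappa> y}"
        using bij_betw_imp_surj_on[OF H[of "\<kappa> y"]] by simp
      then obtain x where "x \<in> X" "\<kappa> x = \<kappa> y" "H (\<kappa> y) x = y" by auto
      then show "y \<in> (\<lambda>x. H (\<kappa> x) x) ` X" by force
    qed
  qed
  ultimately show ?thesis unfolding bij_betw_def ..
qed

lemma bij_matching_subsets:
  assumes fin: "finite T" and card_eq: "card (T \<inter> A) = card (T \<inter> B)"
  obtains h where "bij_betw h T T" and "\<forall>x\<in>T. x \<in> A \<longleftrightarrow> h x \<in> B"
proof -
  have "card (T - A) = card (T - B)"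
    using card_eq fin by (simp add: card_Diff_subset_Int)
  then obtain h2 where h2: "bij_betw h2 (T - A) (T - B)"
    using finite_same_card_bij fin by blast
  obtain h1 where h1: "bij_betw h1 (T \<inter> A) (T \<inter> B)"
    using finite_same_card_bij[OF _ _ card_eq] fin by blast
  define h where "h x = (if x \<in> A then h1 x else h2 x)" for x
  have b1: "bij_betw h (T \<inter> A) (T \<inter> B)"
    using h1 by (rule bij_betw_cong[THEN iffD1, rotated]) (auto simp: h_def)
  have b2: "bij_betw h (T - A) (T - B)"
    using h2 by (rule bij_betw_cong[THEN iffD1, rotated]) (auto simp: h_def)
  have "bij_betw h ((T \<inter> A) \<union> (T - A)) ((T \<inter> B) \<union> (T - B))"
    by (rule bij_betw_combine[OF b1 b2]) auto
  then have "bij_betw h T T" by (simp add: Int_Diff_Un)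
  moreover have "\<forall>x\<in>T. x \<in> A \<longleftrightarrow> h x \<in> B"
    using bij_betwE[OF b1] bij_betwE[OF b2] by blast
  ultimately show thesis by (rule that)
qed

lemma finite_mset_class: "finite {w :: 'a list. mset w = M}"
proof -
  have "{w. mset w = M} \<subseteq> {xs. set xs \<subseteq> set_mset M \<and> length xs = size M}"
    by auto
  moreover have "finite {xs. set xs \<subseteq> set_mset M \<and> length xs = size M}"
    by (rule finite_lists_length_eq) simp
  ultimately show ?thesis by (rule finite_subset)
qed

section \<open>Truncation at m and the decomposition of words\<close>

definition trunc :: "nat \<Rightarrow> nat list \<Rightarrow> nat list" where
  "trunc m w = map (min m) w"

text \<open>The letters of w that are \<ge> m, in order: exactly those that truncation turns into m.\<close>
definition high :: "nat \<Rightarrow> nat list \<Rightarrow> nat list" where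
  "high m w = filter (\<lambda>a. m \<le> a) w"

text \<open>Inverse of the decomposition: fill the occurrences of m in t with the letters of r.\<close>
fun refill :: "nat \<Rightarrow> nat list \<Rightarrow> nat list \<Rightarrow> nat list" where
  "refill m [] r = []"
| "refill m (a # t) r = (if a = m then hd r # refill m t (tl r) else a # refill m t r)"

text \<open>The possible values (trunc m w, high m w) of the decomposition.\<close>
definition splits :: "nat \<Rightarrow> (nat list \<times> nat list) set" where
  "splits m = {(t, r). t \<in> words_on m \<and> (\<forall>a\<in>set r. m \<le> a) \<and> count (mset t) m = length r}"

lemma refill_trunc_high: "refill m (trunc m w) (high m w) = w"
  by (induction w) (auto simp: trunc_def high_def min_def)

lemma refill_props:
  assumes "\<forall>a\<in>set t. a \<le> m" "\<forall>a\<in>set r. m \<le> a" "count (mset t) m = length r"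
  shows "trunc m (refill m t r) = t \<and> high m (refill m t r) = r \<and>
         set (refill m t r) \<subseteq> set t \<union> set r"
  using assms
proof (induction t arbitrary: r)
  case Nil
  then show ?case by (simp add: trunc_def high_def)
next
  case (Cons a t)
  show ?case
  proof (cases "a = m")
    case True
    then obtain b r' where "r = b # r'" using Cons.prems by (cases r) auto
    then show ?thesis using Cons True by (auto simp: trunc_def high_def min_def)
  next
    case False
    then show ?thesis using Cons by (auto simp: trunc_def high_def min_def)
  qed
qed

lemma count_trunc: "count (mset (trunc m w)) m = length (high m w)"
  by (induction w) (auto simp: trunc_def high_def min_def)

lemma mset_trunc_high: "mset w = filter_mset (\<lambda>a. a < m) (mset (trunc m w)) + mset (high m w)"
  by (induction w) (auto simp: trunc_def high_def min_def)

lemma trunc_words_on: "m \<ge> 1 \<Longrightarrow> w \<in> Pstar \<Longrightarrow> trunc m w \<in> words_on m"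
  by (auto simp: trunc_def words_on_def Pstar_def min_def)

lemma split_bij:
  assumes "m \<ge> 1"
  shows "bij_betw (\<lambda>w. (trunc m w, high m w)) Pstar (splits m)"
    and "bij_betw (\<lambda>(t, r). refill m t r) (splits m) Pstar"
proof -
  have split_in: "(trunc m w, high m w) \<in> splits m" if "w \<in> Pstar" for w
    using trunc_words_on[OF assms that] count_trunc by (auto simp: splits_def high_def)
  have refill_in: "refill m t r \<in> Pstar \<and> trunc m (refill m t r) = t \<and> high m (refill m t r) = r"
    if "(t, r) \<in> splits m" for t r
  proof -
    have t: "t \<in> words_on m" and props: "trunc m (refill m t r) = t \<and> high m (refill m t r) = r \<and>
        set (refill m t r) \<subseteq> set t \<union> set r"
      using that refill_props[of t m r] by (auto simp: splits_def words_on_def)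
    then have "refill m t r \<in> Pstar"
      using that assms by (force simp: Pstar_def words_on_def splits_def)
    with props show ?thesis by blast
  qed
  show "bij_betw (\<lambda>w. (trunc m w, high m w)) Pstar (splits m)"
    by (rule bij_betw_byWitness[where f' = "\<lambda>(t, r). refill m t r"])
       (use split_in refill_in refill_trunc_high in auto)
  show "bij_betw (\<lambda>(t, r). refill m t r) (splits m) Pstar"
    by (rule bij_betw_byWitness[where f' = "\<lambda>w. (trunc m w, high m w)"])
       (use split_in refill_in refill_trunc_high in auto)
qed

lemma gfo_le_trunc:
  assumes "u \<in> words_on m"
  shows "gfo_le u (trunc m w) \<longleftrightarrow> gfo_le u w"
proof -
  have letter: "u ! j \<le> min m a \<longleftrightarrow> u ! j \<le> a" if "j < length u" for j a
    using assms that by (auto simp: words_on_def)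
  have window: "(\<forall>j<length u. u ! j \<le> map (min m) w ! (i + j)) \<longleftrightarrow> (\<forall>j<length u. u ! j \<le> w ! (i + j))"
    if "i + length u \<le> length w" for i
    using that letter by auto
  then show ?thesis
    unfolding gfo_le_def trunc_def length_map by (intro ex_cong1 conj_cong refl) simp
qed

lemma Fset_trunc:
  "u \<in> words_on m \<Longrightarrow> m \<ge> 1 \<Longrightarrow> w \<in> Pstar \<Longrightarrow> trunc m w \<in> Fset u \<longleftrightarrow> w \<in> Fset u"
  using gfo_le_trunc[of u m w] trunc_words_on[of m w]
  by (auto simp: Fset_def words_on_def Pstar_def)

section \<open>Rearrangement bijections of [m]^* lift to Pstar\<close>

lemma lift_rearrangement:
  assumes m: "m \<ge> 1" and g: "bij_betw g (words_on m) (words_on m)"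
    and g_mset: "\<And>t. t \<in> words_on m \<Longrightarrow> mset (g t) = mset t"
  defines "f \<equiv> \<lambda>w. refill m (g (trunc m w)) (high m w)"
  shows "bij_betw f Pstar Pstar"
    and "\<And>w. w \<in> Pstar \<Longrightarrow> mset (f w) = mset w \<and> trunc m (f w) = g (trunc m w)"
proof -
  define G where "G = (\<lambda>(t :: nat list, r :: nat list). (g t, r))"
  have "bij_betw G (splits m) (splits m)"
  proof (rule bij_betw_byWitness[where f' = "\<lambda>(t, r). (inv_into (words_on m) g t, r)"])
    have inv: "bij_betw (inv_into (words_on m) g) (words_on m) (words_on m)"
      using g by (rule bij_betw_inv_into)
    have g_count: "count (mset (g t)) m = count (mset t) m" if "t \<in> words_on m" for t
      using g_mset[OF that] by simp
    have inv_count: "count (mset (inv_into (words_on m) g t)) m = count (mset t) m"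
      if "t \<in> words_on m" for t
      using g_count[OF bij_betwE[OF inv, rule_format, OF that]]
        bij_betw_inv_into_right[OF g that] by simp
    show "\<forall>a\<in>splits m. (\<lambda>(t, r). (inv_into (words_on m) g t, r)) (G a) = a"
      using bij_betw_inv_into_left[OF g] by (auto simp: G_def splits_def)
    show "\<forall>a\<in>splits m. G ((\<lambda>(t, r). (inv_into (words_on m) g t, r)) a) = a"
      using bij_betw_inv_into_right[OF g] by (auto simp: G_def splits_def)
    show "G ` splits m \<subseteq> splits m"
      using bij_betwE[OF g] g_count by (auto simp: G_def splits_def)
    show "(\<lambda>(t, r). (inv_into (words_on m) g t, r)) ` splits m \<subseteq> splits m"
      using bij_betwE[OF inv] inv_count by (auto simp: splits_def)
  qed
  then have "bij_betw ((\<lambda>(t, r). refill m t r) \<circ> G \<circ> (\<lambda>w. (trunc m w, high m w))) Pstar Pstar"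
    using split_bij[OF m] by (meson bij_betw_trans)
  moreover have "(\<lambda>(t, r). refill m t r) \<circ> G \<circ> (\<lambda>w. (trunc m w, high m w)) = f"
    by (auto simp: f_def G_def)
  ultimately show "bij_betw f Pstar Pstar" by simp
  fix w assume w: "w \<in> Pstar"
  have t: "trunc m w \<in> words_on m" using trunc_words_on[OF m w] .
  have "(g (trunc m w), high m w) \<in> splits m"
    using bij_betwE[OF g] t count_trunc[of m w] g_mset[OF t]
    by (auto simp: splits_def high_def)
  then have "trunc m (f w) = g (trunc m w)" and "high m (f w) = high m w"
    using refill_props[of "g (trunc m w)" m "high m w"] by (auto simp: f_def splits_def words_on_def)
  then show "mset (f w) = mset w \<and> trunc m (f w) = g (trunc m w)"
    using mset_trunc_high[of "f w" m] mset_trunc_high[of w m] g_mset[OF t] by simp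
qed

lemma wilf_m_words_bij:
  assumes "wilf_m m u v"
  obtains g where "bij_betw g (words_on m) (words_on m)"
    and "\<forall>t\<in>words_on m. mset (g t) = mset t \<and> (t \<in> Fset u \<longleftrightarrow> g t \<in> Fset v)"
proof -
  define C where "C M = {w \<in> words_on m. mset w = M}" for M
  have "\<exists>h. bij_betw h (C M) (C M) \<and> (\<forall>w\<in>C M. w \<in> Fset u \<longleftrightarrow> h w \<in> Fset v)" for M
  proof -
    have "finite (C M)"
      unfolding C_def by (rule finite_subset[OF _ finite_mset_class[of M]]) auto
    moreover have "card (C M \<inter> Fset u) = card (C M \<inter> Fset v)"
    proof -
      have "C M \<inter> Fset x = {w \<in> Fset x \<inter> words_on m. mset w = M}" for x
        unfolding C_def by auto
      then show ?thesis using assms unfolding wilf_m_def by simp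
    qed
    ultimately show ?thesis by (metis bij_matching_subsets)
  qed
  then obtain H where H: "\<And>M. bij_betw (H M) (C M) (C M)"
    and H_F: "\<And>M w. w \<in> C M \<Longrightarrow> w \<in> Fset u \<longleftrightarrow> H M w \<in> Fset v"
    by metis
  have "bij_betw (\<lambda>w. H (mset w) w) (words_on m) (words_on m)"
    using H unfolding C_def by (rule bij_betw_fibrewise)
  moreover have "mset (H (mset t) t) = mset t \<and> (t \<in> Fset u \<longleftrightarrow> H (mset t) t \<in> Fset v)"
    if "t \<in> words_on m" for t
    using bij_betwE[OF H[of "mset t"]] H_F[of t "mset t"] that by (auto simp: C_def)
  ultimately show thesis using that by blast
qed

text \<open>Direction (\<Rightarrow>): lift the bijection of [m]^* to Pstar; Fset u and Fset v only see truncations.\<close>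
lemma wilf_m_imp_rearrangement_map:
  assumes m: "m \<ge> 1" and u: "u \<in> words_on m" and v: "v \<in> words_on m" and W: "wilf_m m u v"
  shows "\<exists>f. rearrangement_map f u v"
proof -
  obtain g where g: "bij_betw g (words_on m) (words_on m)"
    and g_props: "\<forall>t\<in>words_on m. mset (g t) = mset t \<and> (t \<in> Fset u \<longleftrightarrow> g t \<in> Fset v)"
    using wilf_m_words_bij[OF W] by blast
  define f where "f w = refill m (g (trunc m w)) (high m w)" for w
  have f_bij: "bij_betw f Pstar Pstar"
    and f_props: "\<And>w. w \<in> Pstar \<Longrightarrow> mset (f w) = mset w \<and> trunc m (f w) = g (trunc m w)"
    using lift_rearrangement[OF m g] g_props unfolding f_def by blast+
  have "w \<in> Fset u \<longleftrightarrow> f w \<in> Fset v" if w: "w \<in> Pstar" for w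
  proof -
    have "w \<in> Fset u \<longleftrightarrow> trunc m w \<in> Fset u" using Fset_trunc[OF u m w] by simp
    also have "\<dots> \<longleftrightarrow> g (trunc m w) \<in> Fset v" using g_props trunc_words_on[OF m w] by blast
    also have "\<dots> \<longleftrightarrow> f w \<in> Fset v"
      using Fset_trunc[OF v m] f_props[OF w] bij_betwE[OF f_bij] w by metis
    finally show ?thesis .
  qed
  then have "rearrangement_map f u v"
    unfolding rearrangement_map_def using f_bij f_props by blast
  then show ?thesis by blast
qed

lemma rearrangement_bij_class:
  assumes f: "bij_betw f Pstar Pstar" and f_mset: "\<forall>w\<in>Pstar. mset (f w) = mset w"
  shows "f ` {w \<in> Pstar. mset w = M} = {w \<in> Pstar. mset w = M}"
proof -
  let ?S = "{w \<in> Pstar. mset w = M}"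
  have "finite ?S" by (rule finite_subset[OF _ finite_mset_class[of M]]) auto
  moreover have "f ` ?S \<subseteq> ?S" using f_mset bij_betwE[OF f] by auto
  moreover have "inj_on f ?S" using bij_betw_imp_inj_on[OF f] by (rule inj_on_subset) auto
  ultimately show ?thesis by (simp add: endo_inj_surj)
qed

lemma rearrangement_map_imp_wilf_m:
  assumes R: "rearrangement_map f u v"
  shows "wilf_m m u v"
  unfolding wilf_m_def
proof
  fix M :: "nat multiset"
  have f: "bij_betw f Pstar Pstar" and f_mset: "\<forall>w\<in>Pstar. mset (f w) = mset w"
    and f_F: "\<forall>w\<in>Pstar. w \<in> Fset u \<longleftrightarrow> f w \<in> Fset v"
    using R unfolding rearrangement_map_def by auto
  define S where "S = {w \<in> Pstar. mset w = M}"
  define A where "A x = {w \<in> Fset x \<inter> words_on m. mset w = M}" for x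
  have A_S: "A x = {w \<in> S. w \<in> Fset x \<and> w \<in> words_on m}" for x
    by (auto simp: A_def S_def Fset_def)
  have f_S: "f ` S = S" unfolding S_def using rearrangement_bij_class[OF f f_mset] .
  text \<open>f preserves the letters of a word, hence also membership in words_on m.\<close>
  have f_A: "f w \<in> Fset v \<and> f w \<in> words_on m \<longleftrightarrow> w \<in> Fset u \<and> w \<in> words_on m"
    if "w \<in> S" for w
  proof -
    have "set (f w) = set w" using f_mset that unfolding S_def by (metis (mono_tags) mem_Collect_eq set_mset_mset)
    then show ?thesis using f_F that unfolding S_def words_on_def by auto
  qed
  have "f ` A u = A v"
  proof
    show "f ` A u \<subseteq> A v" using f_A f_S unfolding A_S by blast
    show "A v \<subseteq> f ` A u"
    proof
      fix y assume y: "y \<in> A v"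
      then obtain x where "x \<in> S" "y = f x" using f_S unfolding A_S by blast
      then show "y \<in> f ` A u" using y f_A unfolding A_S by blast
    qed
  qed
  moreover have "inj_on f (A u)"
    using bij_betw_imp_inj_on[OF f] by (rule inj_on_subset) (auto simp: A_def Fset_def)
  ultimately show "card (A u) = card (A v)" using card_image by metis
qed

theorem theorem8:
  fixes m :: nat and u v :: "nat list"
  assumes "m \<ge> 1" and "u \<in> words_on m" and "v \<in> words_on m"
  shows "wilf_m m u v \<longleftrightarrow> (\<exists>f. rearrangement_map f u v)"
  using wilf_m_imp_rearrangement_map[OF assms] rearrangement_map_imp_wilf_m by blast

end
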